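(* Consider the implicit scheme and the semi-implicit scheme of the ISPH method described in the context. Suppose that, for every $k=0,1,\dots,K-1$, the particle distribution $X^k=\{x^k_1,\dots,x^k_N\}$ (with its partition $\{1,\dots,N\}=\Lambda_F^k\cup\Lambda_S^k\cup\Lambda_W^k$) satisfies the $h$-connectivity condition. Then both the implicit scheme and the semi-implicit scheme have a unique solution, i.e. at every step $k=0,\dots,K-1$ the equations of the step uniquely determine $\tilde u^{k+1}$, $p^{k+1}$ and $u^{k+1}$.
   Context: Let $d\in\{2,3\}$, $\Omega\subset\mathbb{R}^d$ a bounded domain with smooth boundary, $|\Omega|$ its volume. Fix $\rho>0$ (density), $\nu>0$ (viscosity), $T>0$, a body force $f:\overline\Omega\times[0,T]\to\mathbb{R}^d$ and an initial velocity $u_0:\overline\Omega\to\mathbb{R}^d$. Let $\Delta t>0$, $K=\lfloor T/\Delta t\rfloor$, $t^k=k\Delta t$. Reference weight function: $w\in C^2([0,\infty))$ such that for some $r_0>0$: $w(r)>0$ for $0<r<r_0$, $w(r)=0$ for $r\ge r_0$; $\dot w(r)<0$ for $0<r<r_0$, $\dot w(r)=0$ for $r=0$ or $r\ge r_0$; and $\int_{\mathbb{R}^d}w(|x|)\,dx=1$. For a smoothing length $h>0$ put $w_h(r)=h^{-d}w(r/h)$ with derivative $\dot w_h$, and for $x\neq y$ write $\nabla w_h(|x-y|)=\dot w_h(|x-y|)\frac{x-y}{|x-y|}$ (gradient in $x$), with $\nabla w_h(0):=0$. Particles: $N\in\mathbb{N}$, particle volumes $V_1,\dots,V_N>0$ with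 $\sum_i V_i=|\Omega|$. At each time level $k$ there are pairwise distinct positions $x^k_1,\dots,x^k_N\in\overline\Omega$ with $r_0h>\min_{i\ne j}|x^k_i-x^k_j|$, and a partition of $I_N=\{1,\dots,N\}$ into disjoint sets $\Lambda^k_F$ (inner fluid particles), $\Lambda^k_S$ (free-surface particles), $\Lambda^k_W$ (wall particles). Set $f^k_i=f(x^k_i,t^k)$ for $i\in\Lambda_F^k\cup\Lambda_S^k$ and $f^k_i=0$ for $i\in\Lambda_W^k$. Positions are updated by $x^{k+1}_i=x^k_i+\Delta t\,u^{k+1}_i$. Discrete operators at level $k$ (all distances $|x^k_i-x^k_j|$, gradients $\nabla w_h(|x^k_i-x^k_j|)$): for vector data $v$, $(\Delta_h v)_i=2\sum_{j\ne i,\,j\in I_N}V_j\frac{v_i-v_j}{|x^k_i-x^k_j|}\frac{x^k_i-x^k_j}{|x^k_i-x^k_j|}\cdot\nabla w_h(|x^k_i-x^k_j|)$; $(\nabla_h\cdot v)_i=\sum_{j=1}^N V_j(v_j+v_i)\cdot\nabla w_h(|x^k_i-x^k_j|)$; for scalar $p$ defined on $\Lambda_F^k\cup\Lambda_S^k$, $(\nabla_h p)_i=\sum_{j\in\Lambda_F^k\cup\Lambda_S^k}V_j(p_j-p_i)\nabla w_h(|x^k_i-x^k_j|)$ and $(\Delta_h p)_i=2\sum_{j\in\Lambda_F^k\cup\Lambda_S^k\setminus\{i\}}V_j\frac{p_i-p_j}{|x^k_i-x^k_j|}\frac{x^k_i-x^k_j}{|x^k_i-x^k_j|}\cdot\nabla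 w_h(|x^k_i-x^k_j|)$. Implicit scheme: $u^0_i=u_0(x^0_i)$ ($i=1..N$), and for $k=0,\dots,K-1$ find $\tilde u^{k+1}\in(\mathbb{R}^d)^N$, $p^{k+1}\in\mathbb{R}^{\Lambda_F^k\cup\Lambda_S^k}$, $u^{k+1}\in(\mathbb{R}^d)^N$ with: (b) $\frac{\tilde u^{k+1}_i-u^k_i}{\Delta t}=\nu(\Delta_h\tilde u^{k+1})_i+f^k_i$ for $i\in\Lambda_F^k\cup\Lambda_S^k$, $\tilde u^{k+1}_i=0$ for $i\in\Lambda_W^k$; (c) $(\Delta_h p^{k+1})_i=\frac{\rho}{\Delta t}(\nabla_h\cdot\tilde u^{k+1})_i$ for $i\in\Lambda_F^k$, $p^{k+1}_i=0$ for $i\in\Lambda_S^k$; (d) $\frac{u^{k+1}_i-\tilde u^{k+1}_i}{\Delta t}=-\frac1\rho(\nabla_h p^{k+1})_i$ for $i\in\Lambda_F^k\cup\Lambda_S^k$, $u^{k+1}_i=0$ for $i\in\Lambda_W^k$. The semi-implicit scheme is identical except that (b) is replaced by $\frac{\tilde u^{k+1}_i-u^k_i}{\Delta t}=\nu(\Delta_h u^k)_i+f^k_i$ for $i\in\Lambda_F^k\cup\Lambda_S^k$, $\tilde u^{k+1}_i=0$ for $i\in\Lambda_W^k$. $h$-connectivity condition for $X^k$: for every $i\in\Lambda_F^k$ there exist finite sequences $i=i_1,i_2,\dots,i_\zeta$ and $i=i^*_1,\dots,i^*_{\zeta^*}$ in $I_N$ with $0<|x^k_{i_l}-x^k_{i_{l+1}}|<r_0h$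 and $i_l\in\Lambda_F^k$ for $1\le l<\zeta$, $i_\zeta\in\Lambda_S^k$; and $0<|x^k_{i^*_l}-x^k_{i^*_{l+1}}|<r_0h$ and $i^*_l\in\Lambda_F^k$ for $1\le l<\zeta^*$, $i^*_{\zeta^*}\in\Lambda_W^k$. *)

theory Defs
  imports "HOL-Analysis.Analysis"
begin

definition ref_weight :: "nat \<Rightarrow> (real \<Rightarrow> real) \<Rightarrow> (real \<Rightarrow> real) \<Rightarrow> real \<Rightarrow> bool" where
  "ref_weight d w wd r0 \<longleftrightarrow>
     r0 > 0 \<and>
     (\<exists>wdd. (\<forall>r\<ge>0. (w has_real_derivative wd r) (at r within {0..})) \<and>
            (\<forall>r\<ge>0. (wd has_real_derivative wdd r) (at r within {0..})) \<and>
            continuous_on {0..} wdd) \<and>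
     (\<forall>r. 0 < r \<and> r < r0 \<longrightarrow> w r > 0) \<and>
     (\<forall>r. r \<ge> r0 \<longrightarrow> w r = 0) \<and>
     (\<forall>r. 0 < r \<and> r < r0 \<longrightarrow> wd r < 0) \<and>
     wd 0 = 0 \<and> (\<forall>r. r \<ge> r0 \<longrightarrow> wd r = 0)"

text \<open>Derivative of the scaled kernel w_h(r) = h^(-d) w(r/h): d/dr w_h(r) = h^(-d-1) wd(r/h).\<close>
definition wh_dot :: "nat \<Rightarrow> (real \<Rightarrow> real) \<Rightarrow> real \<Rightarrow> real \<Rightarrow> real" where
  "wh_dot d wd h r = wd (r / h) / h ^ (d + 1)"

text \<open>grad w_h(|z|) for z = x - y; equal to 0 for z = 0.\<close>
definition grad_wh :: "nat \<Rightarrow> (real \<Rightarrow> real) \<Rightarrow> real \<Rightarrow> 'a::euclidean_space \<Rightarrow> 'a" where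
  "grad_wh d wd h z = (if z = 0 then 0 else (wh_dot d wd h (norm z) / norm z) *\<^sub>R z)"

definition lap_vec :: "nat \<Rightarrow> (real \<Rightarrow> real) \<Rightarrow> real \<Rightarrow> nat \<Rightarrow> (nat \<Rightarrow> real) \<Rightarrow> (nat \<Rightarrow> 'a::euclidean_space)
    \<Rightarrow> (nat \<Rightarrow> 'a) \<Rightarrow> nat \<Rightarrow> 'a" where
  "lap_vec d wd h N V x v i =
     2 *\<^sub>R (\<Sum>j\<in>{1..N} - {i}.
        (V j * ((1 / norm (x i - x j)) * (((1 / norm (x i - x j)) *\<^sub>R (x i - x j)) \<bullet> grad_wh d wd h (x i - x j))))
          *\<^sub>R (v i - v j))"

definition div_vec :: "nat \<Rightarrow> (real \<Rightarrow> real) \<Rightarrow> real \<Rightarrow> nat \<Rightarrow> (nat \<Rightarrow> real) \<Rightarrow> (nat \<Rightarrow> 'a::euclidean_space)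
    \<Rightarrow> (nat \<Rightarrow> 'a) \<Rightarrow> nat \<Rightarrow> real" where
  "div_vec d wd h N V x v i = (\<Sum>j\<in>{1..N}. V j * ((v j + v i) \<bullet> grad_wh d wd h (x i - x j)))"

text \<open>Scalar operators; P = Lambda_F \<union> Lambda_S.\<close>
definition grad_sc :: "nat \<Rightarrow> (real \<Rightarrow> real) \<Rightarrow> real \<Rightarrow> nat set \<Rightarrow> (nat \<Rightarrow> real) \<Rightarrow> (nat \<Rightarrow> 'a::euclidean_space)
    \<Rightarrow> (nat \<Rightarrow> real) \<Rightarrow> nat \<Rightarrow> 'a" where
  "grad_sc d wd h P V x p i = (\<Sum>j\<in>P. (V j * (p j - p i)) *\<^sub>R grad_wh d wd h (x i - x j))"

definition lap_sc :: "nat \<Rightarrow> (real \<Rightarrow> real) \<Rightarrow> real \<Rightarrow> nat set \<Rightarrow> (nat \<Rightarrow> real) \<Rightarrow> (nat \<Rightarrow> 'a::euclidean_space)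
    \<Rightarrow> (nat \<Rightarrow> real) \<Rightarrow> nat \<Rightarrow> real" where
  "lap_sc d wd h P V x p i =
     2 * (\<Sum>j\<in>P - {i}. V j * ((p i - p j) / norm (x i - x j)) *
            (((1 / norm (x i - x j)) *\<^sub>R (x i - x j)) \<bullet> grad_wh d wd h (x i - x j)))"

text \<open>Unknowns: ut (tilde u^{k+1}) and u (u^{k+1}) in (R^d)^N, extended by 0 outside {1..N};
  p (p^{k+1}) in R^(Lambda_F \<union> Lambda_S), extended by 0 outside Lambda_F \<union> Lambda_S.
  fk i is the force vector f^k_i (only used for i in Lambda_F \<union> Lambda_S).
  impl = True: implicit scheme (b); impl = False: semi-implicit scheme.\<close>
definition isph_step ::
  "bool \<Rightarrow> nat \<Rightarrow> (real \<Rightarrow> real) \<Rightarrow> real \<Rightarrow> real \<Rightarrow> real \<Rightarrow> real \<Rightarrow> nat \<Rightarrow> (nat \<Rightarrow> real)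
   \<Rightarrow> (nat \<Rightarrow> 'a::euclidean_space) \<Rightarrow> nat set \<Rightarrow> nat set \<Rightarrow> nat set \<Rightarrow> (nat \<Rightarrow> 'a)
   \<Rightarrow> (nat \<Rightarrow> 'a) \<Rightarrow> (nat \<Rightarrow> 'a) \<Rightarrow> (nat \<Rightarrow> real) \<Rightarrow> (nat \<Rightarrow> 'a) \<Rightarrow> bool" where
  "isph_step impl d wd h rho nu dt N V x LF LS LW fk uk ut p u \<longleftrightarrow>
     (\<forall>i. i \<notin> {1..N} \<longrightarrow> ut i = 0 \<and> u i = 0) \<and>
     (\<forall>i. i \<notin> LF \<union> LS \<longrightarrow> p i = 0) \<and>
     (\<forall>i\<in>LF \<union> LS. (1 / dt) *\<^sub>R (ut i - uk i) =
         nu *\<^sub>R lap_vec d wd h N V x (if impl then ut else uk) i + fk i) \<and>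
     (\<forall>i\<in>LW. ut i = 0) \<and>
     (\<forall>i\<in>LF. lap_sc d wd h (LF \<union> LS) V x p i = (rho / dt) * div_vec d wd h N V x ut i) \<and>
     (\<forall>i\<in>LS. p i = 0) \<and>
     (\<forall>i\<in>LF \<union> LS. (1 / dt) *\<^sub>R (u i - ut i) = - ((1 / rho) *\<^sub>R grad_sc d wd h (LF \<union> LS) V x p i)) \<and>
     (\<forall>i\<in>LW. u i = 0)"

definition path_to :: "real \<Rightarrow> real \<Rightarrow> nat \<Rightarrow> (nat \<Rightarrow> 'a::euclidean_space) \<Rightarrow> nat set \<Rightarrow> nat set \<Rightarrow> nat \<Rightarrow> bool" where
  "path_to r0 h N x LF T i \<longleftrightarrow>
     (\<exists>cs. cs \<noteq> [] \<and> hd cs = i \<and> set cs \<subseteq> {1..N} \<and> last cs \<in> T \<and>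
        (\<forall>l. Suc l < length cs \<longrightarrow> cs ! l \<in> LF \<and>
              0 < dist (x (cs ! l)) (x (cs ! Suc l)) \<and> dist (x (cs ! l)) (x (cs ! Suc l)) < r0 * h))"

definition h_connected :: "real \<Rightarrow> real \<Rightarrow> nat \<Rightarrow> (nat \<Rightarrow> 'a::euclidean_space) \<Rightarrow> nat set \<Rightarrow> nat set \<Rightarrow> nat set \<Rightarrow> bool" where
  "h_connected r0 h N x LF LS LW \<longleftrightarrow>
     (\<forall>i\<in>LF. path_to r0 h N x LF LS i \<and> path_to r0 h N x LF LW i)"

end

theory Submission
  imports Defs "Jordan_Normal_Form.Determinant"
begin

text \<open>
  A time step splits into the velocity predictor, the pressure Poisson equation and the
  correction, solved in this order; the correction and the semi-implicit predictor are explicit.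
  The SPH Laplacians are graph Laplacians whose weights \<open>-2 V j wh_dot r / r\<close> (with \<open>r\<close> the
  particle distance) are nonnegative because \<open>wd \<le> 0\<close>, and positive for neighbours closer than
  \<open>r0 h\<close>. Hence, per component, the implicit predictor is a square system \<open>(1/dt + L) v = b\<close> on
  the fluid and free-surface particles, and the pressure equation a square system \<open>L p = b\<close> on the
  inner fluid particles with \<open>p = 0\<close> on the free surface. Both are injective by a discrete maximum
  principle: a positive maximum contradicts the shift \<open>1/dt > 0\<close> in the first case, and in the
  second it propagates along edges of positive weight, which by h-connectivity reach a
  free-surface particle, where \<open>p = 0\<close>. Injective square systems are uniquely solvable.
\<close>

lemma mat_vec_injective_imp_solvable:
  fixes A :: "'a::field mat"
  assumes A: "A \<in> carrier_mat n n"
    and inj: "\<And>v. v \<in> carrier_vec n \<Longrightarrow> A *\<^sub>v v = 0\<^sub>v n \<Longrightarrow> v = 0\<^sub>v n"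
    and b: "b \<in> carrier_vec n"
  shows "\<exists>x\<in>carrier_vec n. A *\<^sub>v x = b"
proof -
  have "det A \<noteq> 0"
    using inj det_0_iff_vec_prod_zero_field[OF A] by blast
  from det_non_zero_imp_unit[OF A this, unfolded Units_def, of "()"]
  obtain B where B: "B \<in> carrier_mat n n" and AB: "A * B = 1\<^sub>m n"
    by (auto simp: ring_mat_def)
  have "A *\<^sub>v (B *\<^sub>v b) = b"
    using A B b by (metis AB assoc_mult_mat_vec one_mult_mat_vec)
  then show ?thesis using B b by (intro bexI[of _ "B *\<^sub>v b"]) auto
qed

lemma square_system_solvable:
  fixes A :: "nat \<Rightarrow> nat \<Rightarrow> 'a::field" and b :: "nat \<Rightarrow> 'a"
  assumes I: "finite I"
    and inj: "\<And>v. \<forall>i\<in>I. (\<Sum>j\<in>I. A i j * v j) = 0 \<Longrightarrow> \<forall>i\<in>I. v i = 0"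
  shows "\<exists>v. \<forall>i\<in>I. (\<Sum>j\<in>I. A i j * v j) = b i"
proof -
  obtain n where n: "I \<subseteq> {..<n}" using finite_nat_bounded[OF I] by blast
  define M where "M = mat n n (\<lambda>(k, l). if k \<in> I \<and> l \<in> I then A k l else of_bool (k = l))"
  have M: "M \<in> carrier_mat n n" unfolding M_def by simp
  have row: "vec_index (M *\<^sub>v v) k = (if k \<in> I then (\<Sum>l\<in>I. A k l * vec_index v l) else vec_index v k)"
    if "v \<in> carrier_vec n" "k < n" for v k
  proof -
    have "vec_index (M *\<^sub>v v) k
        = (\<Sum>l\<in>{..<n}. (if k \<in> I \<and> l \<in> I then A k l else of_bool (k = l)) * vec_index v l)"
      using that unfolding M_def by (simp add: scalar_prod_def lessThan_atLeast0)
    also have "\<dots> = (if k \<in> I then (\<Sum>l\<in>I. A k l * vec_index v l) else vec_index v k)"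
    proof (cases "k \<in> I")
      case True
      then have "(\<Sum>l\<in>{..<n}. (if k \<in> I \<and> l \<in> I then A k l else of_bool (k = l)) * vec_index v l)
          = (\<Sum>l\<in>{..<n}. if l \<in> I then A k l * vec_index v l else 0)"
        by (intro sum.cong) auto
      with True n show ?thesis by (simp add: sum.inter_restrict[symmetric] Int_absorb1)
    qed (use that(2) in simp)
    finally show ?thesis .
  qed
  have "\<exists>x\<in>carrier_vec n. M *\<^sub>v x = vec n (\<lambda>k. if k \<in> I then b k else 0)"
  proof (rule mat_vec_injective_imp_solvable[OF M])
    fix v :: "'a vec" assume v: "v \<in> carrier_vec n" and Mv: "M *\<^sub>v v = 0\<^sub>v n"
    have "\<forall>i\<in>I. (\<Sum>j\<in>I. A i j * vec_index v j) = 0"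
      using row[OF v] Mv n by (metis index_zero_vec(1) lessThan_iff subsetD)
    then have "\<forall>i\<in>I. vec_index v i = 0" by (rule inj)
    then show "v = 0\<^sub>v n"
      using row[OF v] Mv v by (intro eq_vecI) (auto, metis)
  qed simp
  then obtain x where x: "x \<in> carrier_vec n" "M *\<^sub>v x = vec n (\<lambda>k. if k \<in> I then b k else 0)" ..
  have "(\<Sum>j\<in>I. A i j * vec_index x j) = b i" if i: "i \<in> I" for i
  proof -
    have "i < n" using i n by blast
    then show ?thesis using row[OF x(1), of i] arg_cong[OF x(2), of "\<lambda>y. vec_index y i"] i by simp
  qed
  then show ?thesis by blast
qed

no_notation Matrix.scalar_prod (infix "\<bullet>" 70) and Matrix.vec_index (infixl "$" 100)

lemma square_system_solvable_euclidean:
  fixes A :: "nat \<Rightarrow> nat \<Rightarrow> real" and b :: "nat \<Rightarrow> 'a::euclidean_space"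
  assumes I: "finite I"
    and inj: "\<And>v. \<forall>i\<in>I. (\<Sum>j\<in>I. A i j * v j) = 0 \<Longrightarrow> \<forall>i\<in>I. v i = 0"
  shows "\<exists>v. \<forall>i\<in>I. (\<Sum>j\<in>I. A i j *\<^sub>R v j) = b i"
proof -
  have "\<exists>v. \<forall>i\<in>I. (\<Sum>j\<in>I. A i j * v j) = b i \<bullet> e" for e
    by (rule square_system_solvable[OF I]) (rule inj)
  then obtain s where s: "\<And>e i. i \<in> I \<Longrightarrow> (\<Sum>j\<in>I. A i j * s e j) = b i \<bullet> e"
    by metis
  define v where "v j = (\<Sum>e\<in>Basis. s e j *\<^sub>R e)" for j
  have v: "v j \<bullet> e = s e j" if "e \<in> Basis" for e j
    using that by (simp add: v_def inner_sum_left inner_Basis if_distrib[of "\<lambda>a. _ * a"] cong: if_cong)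
  have "(\<Sum>j\<in>I. A i j *\<^sub>R v j) = b i" if "i \<in> I" for i
  proof (rule euclidean_eqI)
    fix e :: 'a assume "e \<in> Basis"
    then show "(\<Sum>j\<in>I. A i j *\<^sub>R v j) \<bullet> e = b i \<bullet> e"
      using s[OF that] v by (simp add: inner_sum_left)
  qed
  then show ?thesis by blast
qed

definition graph_lap :: "(nat \<Rightarrow> nat \<Rightarrow> real) \<Rightarrow> nat set \<Rightarrow> (nat \<Rightarrow> 'a::real_vector) \<Rightarrow> nat \<Rightarrow> 'a" where
  "graph_lap W J v i = (\<Sum>j\<in>J - {i}. W i j *\<^sub>R (v i - v j))"

lemma graph_lap_inner:
  "graph_lap W J v i \<bullet> e = graph_lap W J (\<lambda>j. v j \<bullet> e) i"
  unfolding graph_lap_def by (simp add: inner_sum_left inner_diff_left)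

lemma graph_lap_diff:
  "graph_lap W J (\<lambda>j. v j - u j) i = graph_lap W J v i - graph_lap W J u i"
  unfolding graph_lap_def by (simp add: sum_subtractf[symmetric] algebra_simps)

lemma graph_lap_uminus:
  "graph_lap W J (\<lambda>j. - v j) i = - graph_lap W J v i"
  unfolding graph_lap_def by (simp add: sum_negf[symmetric] algebra_simps)

lemma graph_lap_scale:
  "graph_lap (\<lambda>i j. a * W i j) J v i = a *\<^sub>R graph_lap W J v i"
  unfolding graph_lap_def by (simp add: scaleR_sum_right)

definition graph_lap_matrix :: "real \<Rightarrow> (nat \<Rightarrow> nat \<Rightarrow> real) \<Rightarrow> nat set \<Rightarrow> nat \<Rightarrow> nat \<Rightarrow> real" where
  "graph_lap_matrix c W J i j = (if j = i then c + (\<Sum>l\<in>J - {i}. W i l) else - W i j)"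

lemma shifted_graph_lap_eq_matrix:
  fixes v :: "nat \<Rightarrow> 'a::real_vector"
  assumes J: "finite J" and IJ: "I \<subseteq> J" and i: "i \<in> I" and v: "\<forall>j. j \<notin> I \<longrightarrow> v j = 0"
  shows "c *\<^sub>R v i + graph_lap W J v i = (\<Sum>j\<in>I. graph_lap_matrix c W J i j *\<^sub>R v j)"
proof -
  have I: "finite I" using J IJ finite_subset by blast
  have "graph_lap W J v i = (\<Sum>l\<in>J - {i}. W i l) *\<^sub>R v i - (\<Sum>j\<in>J - {i}. W i j *\<^sub>R v j)"
    unfolding graph_lap_def by (simp add: scaleR_diff_right sum_subtractf scaleR_sum_left)
  also have "(\<Sum>j\<in>J - {i}. W i j *\<^sub>R v j) = (\<Sum>j\<in>I - {i}. W i j *\<^sub>R v j)"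
    using J IJ v by (intro sum.mono_neutral_right) auto
  finally have "c *\<^sub>R v i + graph_lap W J v i
      = (c + (\<Sum>l\<in>J - {i}. W i l)) *\<^sub>R v i + (\<Sum>j\<in>I - {i}. (- W i j) *\<^sub>R v j)"
    by (simp add: scaleR_add_left sum_negf)
  also have "\<dots> = (\<Sum>j\<in>I. graph_lap_matrix c W J i j *\<^sub>R v j)"
    using I i by (simp add: sum.remove graph_lap_matrix_def)
  finally show ?thesis .
qed

lemma shifted_graph_lap_ex1:
  fixes b :: "nat \<Rightarrow> 'a::euclidean_space"
  assumes J: "finite J" and IJ: "I \<subseteq> J"
    and inj: "\<And>v. \<forall>j. j \<notin> I \<longrightarrow> v j = 0 \<Longrightarrow> \<forall>i\<in>I. c * v i + graph_lap W J v i = 0 \<Longrightarrow>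
      \<forall>i\<in>I. v i = 0"
  shows "\<exists>!v. (\<forall>j. j \<notin> I \<longrightarrow> v j = 0) \<and> (\<forall>i\<in>I. c *\<^sub>R v i + graph_lap W J v i = b i)"
proof (rule ex_ex1I)
  have I: "finite I" using J IJ finite_subset by blast
  have "\<forall>i\<in>I. v i = 0" if hom: "\<forall>i\<in>I. (\<Sum>j\<in>I. graph_lap_matrix c W J i j * v j) = 0" for v
  proof -
    define v' where "v' j = (if j \<in> I then v j else 0)" for j
    have "\<forall>i\<in>I. c * v' i + graph_lap W J v' i = 0"
      using shifted_graph_lap_eq_matrix[OF J IJ, of _ v' c W] hom by (simp add: v'_def)
    then show ?thesis using inj[of v'] by (simp add: v'_def)
  qed
  from square_system_solvable_euclidean[OF I this]
  obtain u where u: "\<forall>i\<in>I. (\<Sum>j\<in>I. graph_lap_matrix c W J i j *\<^sub>R u j) = b i" ..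
  define v where "v j = (if j \<in> I then u j else 0)" for j
  have "c *\<^sub>R v i + graph_lap W J v i = b i" if i: "i \<in> I" for i
  proof -
    have "c *\<^sub>R v i + graph_lap W J v i = (\<Sum>j\<in>I. graph_lap_matrix c W J i j *\<^sub>R v j)"
      using i by (intro shifted_graph_lap_eq_matrix[OF J IJ]) (simp_all add: v_def)
    also have "\<dots> = b i" using u i by (simp add: v_def)
    finally show ?thesis .
  qed
  then show "\<exists>v. (\<forall>j. j \<notin> I \<longrightarrow> v j = 0) \<and> (\<forall>i\<in>I. c *\<^sub>R v i + graph_lap W J v i = b i)"
    by (intro exI[of _ v]) (simp add: v_def)
next
  fix v u :: "nat \<Rightarrow> 'a"
  assume v: "(\<forall>j. j \<notin> I \<longrightarrow> v j = 0) \<and> (\<forall>i\<in>I. c *\<^sub>R v i + graph_lap W J v i = b i)"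
    and u: "(\<forall>j. j \<notin> I \<longrightarrow> u j = 0) \<and> (\<forall>i\<in>I. c *\<^sub>R u i + graph_lap W J u i = b i)"
  have "v j \<bullet> e = u j \<bullet> e" if e: "e \<in> Basis" for e j
  proof -
    define w where "w = (\<lambda>j. (v j - u j) \<bullet> e)"
    have "c * w i + graph_lap W J w i = (c *\<^sub>R v i + graph_lap W J v i - (c *\<^sub>R u i + graph_lap W J u i)) \<bullet> e"
      for i
    proof -
      have "graph_lap W J w i = graph_lap W J (\<lambda>j. v j - u j) i \<bullet> e"
        unfolding w_def by (rule graph_lap_inner[symmetric])
      then show ?thesis by (simp add: w_def graph_lap_diff algebra_simps)
    qed
    then have "\<forall>i\<in>I. c * w i + graph_lap W J w i = 0" using v u by simp
    moreover have "\<forall>j. j \<notin> I \<longrightarrow> w j = 0" using v u by (simp add: w_def)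
    ultimately have "\<forall>i\<in>I. w i = 0" by (rule inj[rotated])
    then show ?thesis using v u by (cases "j \<in> I") (simp_all add: w_def inner_diff_left)
  qed
  then show "v = u" by (auto intro: euclidean_eqI)
qed

lemma graph_lap_nonneg_at_max:
  fixes v :: "nat \<Rightarrow> real"
  assumes J: "finite J" and W: "\<forall>j\<in>J. 0 \<le> W i j" and max: "\<forall>j\<in>J. v j \<le> v i"
  shows "0 \<le> graph_lap W J v i"
  unfolding graph_lap_def using W max by (intro sum_nonneg) simp

lemma graph_lap_zero_at_max:
  fixes v :: "nat \<Rightarrow> real"
  assumes J: "finite J" and W: "\<forall>j\<in>J. 0 \<le> W i j" and max: "\<forall>j\<in>J. v j \<le> v i"
    and zero: "graph_lap W J v i = 0" and j: "j \<in> J - {i}" "0 < W i j"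
  shows "v j = v i"
proof -
  have "\<forall>l\<in>J - {i}. W i l * (v i - v l) = 0"
    using zero W max J by (subst sum_nonneg_eq_0_iff[symmetric]) (auto simp: graph_lap_def)
  then have "W i j * (v i - v j) = 0" using j(1) by blast
  with j(2) show ?thesis by simp
qed

lemma positive_max_in_support:
  fixes v :: "nat \<Rightarrow> real"
  assumes J: "finite J" and IJ: "I \<subseteq> J" and v: "\<forall>j. j \<notin> I \<longrightarrow> v j = 0"
    and pos: "\<not> (\<forall>i\<in>I. v i \<le> 0)"
  obtains i where "i \<in> I" "0 < v i" "\<forall>j\<in>J. v j \<le> v i"
proof -
  obtain i1 where i1: "i1 \<in> I" "0 < v i1" using pos by auto
  define m where "m = Max (v ` J)"
  have le_m: "v j \<le> m" if "j \<in> J" for j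
    unfolding m_def using J that by simp
  have "m \<in> v ` J" unfolding m_def using J IJ i1 by (intro Max_in) auto
  then obtain i where i: "i \<in> J" "v i = m" by auto
  have "0 < m" using le_m[of i1] i1 IJ by auto
  then have "i \<in> I" using i v by auto
  then show thesis using that i le_m \<open>0 < m\<close> by auto
qed

lemma shifted_graph_lap_max_principle:
  fixes v :: "nat \<Rightarrow> real"
  assumes J: "finite J" and IJ: "I \<subseteq> J" and c: "0 < c" and W: "\<forall>i\<in>I. \<forall>j\<in>J. 0 \<le> W i j"
    and v: "\<forall>j. j \<notin> I \<longrightarrow> v j = 0" and eq: "\<forall>i\<in>I. c * v i + graph_lap W J v i = 0"
  shows "\<forall>i\<in>I. v i \<le> 0"
proof (rule ccontr)
  assume "\<not> (\<forall>i\<in>I. v i \<le> 0)"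
  then obtain i where i: "i \<in> I" "0 < v i" "\<forall>j\<in>J. v j \<le> v i"
    using positive_max_in_support[OF J IJ v] by blast
  have "0 \<le> graph_lap W J v i" using graph_lap_nonneg_at_max[OF J] W i by blast
  moreover have "0 < c * v i" using c i by simp
  moreover have "c * v i + graph_lap W J v i = 0" using eq i(1) by blast
  ultimately show False by linarith
qed

lemma hd_last_in_rtrancl:
  assumes "cs \<noteq> []" and "\<forall>l. Suc l < length cs \<longrightarrow> (cs ! l, cs ! Suc l) \<in> E"
  shows "(hd cs, last cs) \<in> E\<^sup>*"
  using assms
proof (induction cs)
  case (Cons a cs)
  show ?case
  proof (cases "cs = []")
    case False
    have "(a, hd cs) \<in> E" using Cons.prems(2)[rule_format, of 0] False by (simp add: hd_conv_nth)
    moreover have "\<forall>l. Suc l < length cs \<longrightarrow> (cs ! l, cs ! Suc l) \<in> E"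
    proof (intro allI impI)
      fix l assume "Suc l < length cs"
      then show "(cs ! l, cs ! Suc l) \<in> E" using Cons.prems(2)[rule_format, of "Suc l"] by simp
    qed
    then have "(hd cs, last cs) \<in> E\<^sup>*" using Cons.IH False by blast
    ultimately show ?thesis using False by (simp add: converse_rtrancl_into_rtrancl)
  qed simp
qed simp

definition positive_edges :: "(nat \<Rightarrow> nat \<Rightarrow> real) \<Rightarrow> nat set \<Rightarrow> nat set \<Rightarrow> (nat \<times> nat) set" where
  "positive_edges W I J = {(i, j). i \<in> I \<and> j \<in> J - {i} \<and> 0 < W i j}"

lemma mem_positive_edges [simp]:
  "(i, j) \<in> positive_edges W I J \<longleftrightarrow> i \<in> I \<and> j \<in> J - {i} \<and> 0 < W i j"
  by (simp add: positive_edges_def)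

lemma graph_lap_max_principle:
  fixes v :: "nat \<Rightarrow> real"
  assumes J: "finite J" and IJ: "I \<subseteq> J" and W: "\<forall>i\<in>I. \<forall>j\<in>J. 0 \<le> W i j"
    and reach: "\<forall>i\<in>I. \<exists>j\<in>J - I. (i, j) \<in> (positive_edges W I J)\<^sup>*"
    and v: "\<forall>j. j \<notin> I \<longrightarrow> v j = 0" and eq: "\<forall>i\<in>I. graph_lap W J v i = 0"
  shows "\<forall>i\<in>I. v i \<le> 0"
proof (rule ccontr)
  assume "\<not> (\<forall>i\<in>I. v i \<le> 0)"
  then obtain i where i: "i \<in> I" "0 < v i" and max: "\<forall>j\<in>J. v j \<le> v i"
    using positive_max_in_support[OF J IJ v] by blast
  have propagate: "v j = v i" if "(i, j) \<in> (positive_edges W I J)\<^sup>*" for j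
    using that
  proof (induction rule: rtrancl_induct)
    case (step k j)
    then have k: "k \<in> I" and j: "j \<in> J - {k}" "0 < W k j" by simp_all
    have Wk: "\<forall>l\<in>J. 0 \<le> W k l" using W k by blast
    have max_k: "\<forall>l\<in>J. v l \<le> v k" using max step.IH by simp
    have eq_k: "graph_lap W J v k = 0" using eq k by blast
    show ?case using graph_lap_zero_at_max[OF J Wk max_k eq_k j] step.IH by simp
  qed simp
  obtain j where "j \<in> J - I" "(i, j) \<in> (positive_edges W I J)\<^sup>*" using reach i(1) by blast
  then have "v j = v i" "v j = 0" using propagate v by blast+
  with i(2) show False by simp
qed

lemma shifted_graph_lap_kernel_trivial:
  fixes v :: "nat \<Rightarrow> real"
  assumes max_principle: "\<And>v. \<forall>j. j \<notin> I \<longrightarrow> v j = 0 \<Longrightarrow> \<forall>i\<in>I. c * v i + graph_lap W J v i = 0 \<Longrightarrow>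
      \<forall>i\<in>I. v i \<le> 0"
    and v: "\<forall>j. j \<notin> I \<longrightarrow> v j = 0" and eq: "\<forall>i\<in>I. c * v i + graph_lap W J v i = 0"
  shows "\<forall>i\<in>I. v i = 0"
proof -
  have "\<forall>i\<in>I. - v i \<le> 0"
    using v eq by (intro max_principle) (auto simp: graph_lap_uminus)
  with max_principle[OF v eq] show ?thesis by (simp add: order_antisym)
qed

lemma explicit_update_ex1:
  fixes a g :: "nat \<Rightarrow> 'a::real_vector"
  assumes dt: "dt \<noteq> 0"
  shows "\<exists>!v. (\<forall>i. i \<notin> P \<longrightarrow> v i = 0) \<and> (\<forall>i\<in>P. (1 / dt) *\<^sub>R (v i - a i) = g i)"
proof -
  have "(1 / dt) *\<^sub>R (y - a i) = g i \<longleftrightarrow> y = a i + dt *\<^sub>R g i" for y i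
  proof
    assume "(1 / dt) *\<^sub>R (y - a i) = g i"
    then have "dt *\<^sub>R ((1 / dt) *\<^sub>R (y - a i)) = dt *\<^sub>R g i" by simp
    then show "y = a i + dt *\<^sub>R g i" using dt by (simp add: algebra_simps)
  qed (use dt in simp)
  then have "(\<forall>i. i \<notin> P \<longrightarrow> v i = 0) \<and> (\<forall>i\<in>P. (1 / dt) *\<^sub>R (v i - a i) = g i) \<longleftrightarrow>
      v = (\<lambda>i. if i \<in> P then a i + dt *\<^sub>R g i else 0)" for v
    by (auto simp: fun_eq_iff)
  then show ?thesis by simp
qed

lemma ex1_triple_sequential:
  assumes "\<exists>!a. A a" and "\<And>a. A a \<Longrightarrow> \<exists>!b. B a b" and "\<And>a b. A a \<Longrightarrow> B a b \<Longrightarrow> \<exists>!c. C a b c"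
  shows "\<exists>!(a, b, c). A a \<and> B a b \<and> C a b c"
  using assms by (simp add: Ex1_def split_paired_all) metis

definition sph_weight ::
  "nat \<Rightarrow> (real \<Rightarrow> real) \<Rightarrow> real \<Rightarrow> (nat \<Rightarrow> real) \<Rightarrow> (nat \<Rightarrow> 'a::euclidean_space) \<Rightarrow> nat \<Rightarrow> nat \<Rightarrow> real"
  where "sph_weight d wd h V x i j = - 2 * V j * (wh_dot d wd h (norm (x i - x j)) / norm (x i - x j))"

lemma radial_component_grad_wh:
  fixes r :: "'a::euclidean_space"
  shows "(1 / norm r) * (((1 / norm r) *\<^sub>R r) \<bullet> grad_wh d wd h r) = wh_dot d wd h (norm r) / norm r"
proof (cases "r = 0")
  case False
  have "r \<bullet> r = norm r ^ 2" by (simp add: power2_norm_eq_inner)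
  with False show ?thesis by (simp add: grad_wh_def field_simps power2_eq_square)
qed (simp add: grad_wh_def)

lemma lap_vec_eq_graph_lap:
  "lap_vec d wd h N V x v i = - graph_lap (sph_weight d wd h V x) {1..N} v i"
  unfolding lap_vec_def radial_component_grad_wh graph_lap_def sph_weight_def
  by (simp add: scaleR_sum_right sum_negf[symmetric] mult.assoc)

lemma lap_sc_eq_graph_lap:
  "lap_sc d wd h P V x p i = - graph_lap (sph_weight d wd h V x) P p i"
proof -
  have "V j * ((p i - p j) / norm (x i - x j)) *
      (((1 / norm (x i - x j)) *\<^sub>R (x i - x j)) \<bullet> grad_wh d wd h (x i - x j))
    = V j * ((1 / norm (x i - x j)) *
      (((1 / norm (x i - x j)) *\<^sub>R (x i - x j)) \<bullet> grad_wh d wd h (x i - x j))) * (p i - p j)" for j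
    by (simp add: field_simps)
  then show ?thesis
    unfolding lap_sc_def radial_component_grad_wh graph_lap_def sph_weight_def
    by (simp add: sum_distrib_left sum_negf[symmetric] algebra_simps)
qed

lemma sph_weight_nonneg:
  assumes wd: "\<forall>s\<ge>0. wd s \<le> 0" and h: "0 < h" and V: "0 \<le> V j"
  shows "0 \<le> sph_weight d wd h V x i j"
proof -
  have "wd (norm (x i - x j) / h) \<le> 0" using wd h by simp
  then have "wh_dot d wd h (norm (x i - x j)) / norm (x i - x j) \<le> 0"
    using h by (simp add: wh_dot_def divide_nonpos_nonneg)
  from mult_nonneg_nonpos[OF V this] show ?thesis unfolding sph_weight_def by linarith
qed

lemma sph_weight_pos:
  assumes wd: "\<forall>s. 0 < s \<and> s < r0 \<longrightarrow> wd s < 0" and h: "0 < h" and V: "0 < V j"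
    and dist: "0 < dist (x i) (x j)" "dist (x i) (x j) < r0 * h"
  shows "0 < sph_weight d wd h V x i j"
proof -
  have "0 < norm (x i - x j) / h" "norm (x i - x j) / h < r0"
    using dist h by (auto simp: dist_norm field_simps)
  then have "wd (norm (x i - x j) / h) < 0" using wd by blast
  then have "wh_dot d wd h (norm (x i - x j)) / norm (x i - x j) < 0"
    using h dist by (simp add: wh_dot_def dist_norm divide_neg_pos)
  from mult_pos_neg[OF V this] show ?thesis unfolding sph_weight_def by linarith
qed

lemma ref_weight_deriv_nonpos:
  assumes "ref_weight d w wd r0" and "0 \<le> s"
  shows "wd s \<le> 0"
  using assms unfolding ref_weight_def
  by (cases "s = 0"; cases "s < r0") (auto simp: less_imp_le)

lemma path_to_imp_reachable:
  assumes path: "path_to r0 h N x LF LS i" and disj: "LF \<inter> LS = {}"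
    and W: "\<And>k j. k \<in> {1..N} \<Longrightarrow> j \<in> {1..N} \<Longrightarrow> 0 < dist (x k) (x j) \<Longrightarrow>
      dist (x k) (x j) < r0 * h \<Longrightarrow> 0 < W k j"
  shows "\<exists>j\<in>(LF \<union> LS) - LF. (i, j) \<in> (positive_edges W LF (LF \<union> LS))\<^sup>*"
proof -
  obtain cs where cs: "cs \<noteq> []" "hd cs = i" "set cs \<subseteq> {1..N}" "last cs \<in> LS"
    and steps: "\<forall>l. Suc l < length cs \<longrightarrow> cs ! l \<in> LF \<and>
      0 < dist (x (cs ! l)) (x (cs ! Suc l)) \<and> dist (x (cs ! l)) (x (cs ! Suc l)) < r0 * h"
    using path unfolding path_to_def by blast
  have "(cs ! l, cs ! Suc l) \<in> positive_edges W LF (LF \<union> LS)" if l: "Suc l < length cs" for l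
  proof -
    have "cs ! Suc l \<in> LF \<union> LS"
    proof (cases "Suc (Suc l) < length cs")
      case False
      then have "Suc l = length cs - 1" using l by simp
      then have "cs ! Suc l = last cs" using cs(1) by (simp add: last_conv_nth)
      then show ?thesis using cs(4) by simp
    qed (use steps in blast)
    moreover have "cs ! l \<in> {1..N}" "cs ! Suc l \<in> {1..N}"
      using cs(3) l by (meson Suc_lessD nth_mem subsetD)+
    ultimately show ?thesis using steps l W by force
  qed
  then have "(i, last cs) \<in> (positive_edges W LF (LF \<union> LS))\<^sup>*"
    using hd_last_in_rtrancl[OF cs(1)] cs(2) by blast
  moreover have "last cs \<in> (LF \<union> LS) - LF" using cs(4) disj by blast
  ultimately show ?thesis by blast
qed

context
  fixes d :: nat and wd :: "real \<Rightarrow> real" and h r0 rho nu dt :: real and N :: nat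
    and V :: "nat \<Rightarrow> real" and x :: "nat \<Rightarrow> 'a::euclidean_space"
    and LF LS LW :: "nat set" and fk uk :: "nat \<Rightarrow> 'a"
  assumes wd_nonpos: "\<forall>s\<ge>0. wd s \<le> 0" and wd_neg: "\<forall>s. 0 < s \<and> s < r0 \<longrightarrow> wd s < 0"
    and h: "0 < h" and nu: "0 \<le> nu" and dt: "0 < dt"
    and V: "\<forall>i\<in>{1..N}. 0 < V i"
    and part: "LF \<union> LS \<union> LW = {1..N}" "LF \<inter> LS = {}" "LF \<inter> LW = {}" "LS \<inter> LW = {}"
    and conn: "h_connected r0 h N x LF LS LW"
begin

definition predictor :: "bool \<Rightarrow> (nat \<Rightarrow> 'a) \<Rightarrow> bool" where
  "predictor impl ut \<longleftrightarrow> (\<forall>i. i \<notin> LF \<union> LS \<longrightarrow> ut i = 0) \<and>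
     (\<forall>i\<in>LF \<union> LS. (1 / dt) *\<^sub>R (ut i - uk i) =
        nu *\<^sub>R lap_vec d wd h N V x (if impl then ut else uk) i + fk i)"

definition pressure_poisson :: "(nat \<Rightarrow> 'a) \<Rightarrow> (nat \<Rightarrow> real) \<Rightarrow> bool" where
  "pressure_poisson ut p \<longleftrightarrow> (\<forall>i. i \<notin> LF \<longrightarrow> p i = 0) \<and>
     (\<forall>i\<in>LF. lap_sc d wd h (LF \<union> LS) V x p i = (rho / dt) * div_vec d wd h N V x ut i)"

definition corrector :: "(nat \<Rightarrow> 'a) \<Rightarrow> (nat \<Rightarrow> real) \<Rightarrow> (nat \<Rightarrow> 'a) \<Rightarrow> bool" where
  "corrector ut p u \<longleftrightarrow> (\<forall>i. i \<notin> LF \<union> LS \<longrightarrow> u i = 0) \<and>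
     (\<forall>i\<in>LF \<union> LS. (1 / dt) *\<^sub>R (u i - ut i) = - ((1 / rho) *\<^sub>R grad_sc d wd h (LF \<union> LS) V x p i))"

lemma isph_step_iff:
  "isph_step impl d wd h rho nu dt N V x LF LS LW fk uk ut p u \<longleftrightarrow>
     predictor impl ut \<and> pressure_poisson ut p \<and> corrector ut p u"
proof -
  have supp: "(\<forall>i. i \<notin> {1..N} \<longrightarrow> v i = 0) \<and> (\<forall>i\<in>LW. v i = 0) \<longleftrightarrow> (\<forall>i. i \<notin> LF \<union> LS \<longrightarrow> v i = 0)"
    for v :: "nat \<Rightarrow> 'a"
    using part by blast
  have "(\<forall>i. i \<notin> LF \<union> LS \<longrightarrow> p i = 0) \<and> (\<forall>i\<in>LS. p i = 0) \<longleftrightarrow> (\<forall>i. i \<notin> LF \<longrightarrow> p i = 0)"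
    using part by blast
  moreover have "(\<forall>i. i \<notin> {1..N} \<longrightarrow> ut i = 0 \<and> u i = 0) \<longleftrightarrow>
      (\<forall>i. i \<notin> {1..N} \<longrightarrow> ut i = 0) \<and> (\<forall>i. i \<notin> {1..N} \<longrightarrow> u i = 0)"
    by blast
  ultimately show ?thesis
    using supp[of ut] supp[of u]
    unfolding isph_step_def predictor_def pressure_poisson_def corrector_def by argo
qed

lemma predictor_semi_implicit_ex1: "\<exists>!ut. predictor False ut"
  unfolding predictor_def if_False using dt by (intro explicit_update_ex1) simp

lemma corrector_ex1: "\<exists>!u. corrector ut p u"
  unfolding corrector_def using dt by (intro explicit_update_ex1) simp

lemma sph_weight_nonneg_on: "j \<in> {1..N} \<Longrightarrow> 0 \<le> sph_weight d wd h V x i j"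
  using V by (intro sph_weight_nonneg[OF wd_nonpos h]) (simp add: less_imp_le)

lemma predictor_implicit_ex1: "\<exists>!ut. predictor True ut"
proof -
  let ?P = "LF \<union> LS" and ?W = "\<lambda>i j. nu * sph_weight d wd h V x i j"
  have P: "?P \<subseteq> {1..N}" using part by blast
  have "(1 / dt) *\<^sub>R (v - uk i) = nu *\<^sub>R lap_vec d wd h N V x ut i + fk i \<longleftrightarrow>
      (1 / dt) *\<^sub>R v + graph_lap ?W {1..N} ut i = (1 / dt) *\<^sub>R uk i + fk i" for ut v i
    by (auto simp: lap_vec_eq_graph_lap graph_lap_scale algebra_simps)
  then have "predictor True ut \<longleftrightarrow> (\<forall>i. i \<notin> ?P \<longrightarrow> ut i = 0) \<and>
      (\<forall>i\<in>?P. (1 / dt) *\<^sub>R ut i + graph_lap ?W {1..N} ut i = (1 / dt) *\<^sub>R uk i + fk i)" for ut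
    unfolding predictor_def by simp
  moreover have "\<exists>!ut. (\<forall>i. i \<notin> ?P \<longrightarrow> ut i = 0) \<and>
      (\<forall>i\<in>?P. (1 / dt) *\<^sub>R ut i + graph_lap ?W {1..N} ut i = (1 / dt) *\<^sub>R uk i + fk i)"
  proof (rule shifted_graph_lap_ex1[OF _ P])
    fix v :: "nat \<Rightarrow> real"
    assume v: "\<forall>j. j \<notin> ?P \<longrightarrow> v j = 0" and eq: "\<forall>i\<in>?P. 1 / dt * v i + graph_lap ?W {1..N} v i = 0"
    have W: "\<forall>i\<in>?P. \<forall>j\<in>{1..N}. 0 \<le> ?W i j" using nu sph_weight_nonneg_on by simp
    have "\<forall>i\<in>?P. q i \<le> 0"
      if "\<forall>j. j \<notin> ?P \<longrightarrow> q j = 0" "\<forall>i\<in>?P. 1 / dt * q i + graph_lap ?W {1..N} q i = 0"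
      for q :: "nat \<Rightarrow> real"
      using shifted_graph_lap_max_principle[OF _ P _ W, of "1 / dt"] dt that by simp
    then show "\<forall>i\<in>?P. v i = 0" by (rule shifted_graph_lap_kernel_trivial[OF _ v eq])
  qed simp
  ultimately show ?thesis by simp
qed

lemma pressure_poisson_ex1: "\<exists>!p. pressure_poisson ut p"
proof -
  let ?P = "LF \<union> LS" and ?W = "sph_weight d wd h V x"
  have fin: "finite ?P" using part by (metis finite_Un finite_atLeastAtMost)
  have "lap_sc d wd h ?P V x p i = (rho / dt) * div_vec d wd h N V x ut i \<longleftrightarrow>
      0 *\<^sub>R p i + graph_lap ?W ?P p i = - (rho / dt) * div_vec d wd h N V x ut i" for p i
    by (auto simp: lap_sc_eq_graph_lap)
  then have "pressure_poisson ut p \<longleftrightarrow> (\<forall>i. i \<notin> LF \<longrightarrow> p i = 0) \<and>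
      (\<forall>i\<in>LF. 0 *\<^sub>R p i + graph_lap ?W ?P p i = - (rho / dt) * div_vec d wd h N V x ut i)" for p
    unfolding pressure_poisson_def by simp
  moreover have "\<exists>!p. (\<forall>i. i \<notin> LF \<longrightarrow> p i = 0) \<and>
      (\<forall>i\<in>LF. 0 *\<^sub>R p i + graph_lap ?W ?P p i = - (rho / dt) * div_vec d wd h N V x ut i)"
  proof (rule shifted_graph_lap_ex1)
    fix p :: "nat \<Rightarrow> real"
    assume p: "\<forall>j. j \<notin> LF \<longrightarrow> p j = 0" and eq: "\<forall>i\<in>LF. 0 * p i + graph_lap ?W ?P p i = 0"
    have W: "\<forall>i\<in>LF. \<forall>j\<in>?P. 0 \<le> ?W i j" using part sph_weight_nonneg_on by blast
    have reach: "\<forall>i\<in>LF. \<exists>j\<in>?P - LF. (i, j) \<in> (positive_edges ?W LF ?P)\<^sup>*"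
    proof
      fix i assume "i \<in> LF"
      then have "path_to r0 h N x LF LS i" using conn unfolding h_connected_def by blast
      then show "\<exists>j\<in>?P - LF. (i, j) \<in> (positive_edges ?W LF ?P)\<^sup>*"
        using V by (intro path_to_imp_reachable[OF _ part(2)] sph_weight_pos[OF wd_neg h]) auto
    qed
    have "\<forall>i\<in>LF. q i \<le> 0"
      if "\<forall>j. j \<notin> LF \<longrightarrow> q j = 0" "\<forall>i\<in>LF. 0 * q i + graph_lap ?W ?P q i = 0"
      for q :: "nat \<Rightarrow> real"
      using graph_lap_max_principle[OF fin _ W reach, of q] that by simp
    then show "\<forall>i\<in>LF. p i = 0" by (rule shifted_graph_lap_kernel_trivial[OF _ p eq])
  qed (use fin in simp_all)
  ultimately show ?thesis by simp
qed

lemma isph_step_ex1: "\<exists>!(ut, p, u). isph_step impl d wd h rho nu dt N V x LF LS LW fk uk ut p u"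
  unfolding isph_step_iff
proof (rule ex1_triple_sequential)
  show "\<exists>!ut. predictor impl ut"
    using predictor_implicit_ex1 predictor_semi_implicit_ex1 by (cases impl) simp_all
qed (simp_all add: pressure_poisson_ex1 corrector_ex1)

end

theorem theorem1:
  fixes \<Omega> :: "'a::euclidean_space set"
    and rho nu T dt h r0 :: real and K N :: nat
    and w wd :: "real \<Rightarrow> real"
    and f :: "'a \<Rightarrow> real \<Rightarrow> 'a" and u0 :: "'a \<Rightarrow> 'a"
    and V :: "nat \<Rightarrow> real"
    and X :: "nat \<Rightarrow> nat \<Rightarrow> 'a"
    and LF LS LW :: "nat \<Rightarrow> nat set"
  assumes dim: "DIM('a) \<in> {2, 3}"
    and dom: "open \<Omega>" "connected \<Omega>" "bounded \<Omega>" "\<Omega> \<noteq> {}"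
    and rho: "rho > 0" and nu: "nu > 0" and T: "T > 0"
    and dt: "dt > 0" and K: "K = nat \<lfloor>T / dt\<rfloor>"
    and weight: "ref_weight DIM('a) w wd r0"
    and wint: "((\<lambda>z::'a. w (norm z)) has_integral 1) UNIV"
    and h: "h > 0"
    and V: "\<forall>i\<in>{1..N}. V i > 0" "(\<Sum>i\<in>{1..N}. V i) = measure lebesgue \<Omega>"
    and pos: "\<forall>k<K. \<forall>i\<in>{1..N}. X k i \<in> closure \<Omega>"
    and distinct: "\<forall>k<K. \<forall>i\<in>{1..N}. \<forall>j\<in>{1..N}. i \<noteq> j \<longrightarrow> X k i \<noteq> X k j"
    and close: "\<forall>k<K. \<exists>i\<in>{1..N}. \<exists>j\<in>{1..N}. i \<noteq> j \<and> dist (X k i) (X k j) < r0 * h"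
    and part: "\<forall>k<K. LF k \<union> LS k \<union> LW k = {1..N} \<and> LF k \<inter> LS k = {} \<and>
                      LF k \<inter> LW k = {} \<and> LS k \<inter> LW k = {}"
    and conn: "\<forall>k<K. h_connected r0 h N (X k) (LF k) (LS k) (LW k)"
  shows "\<forall>k<K. \<forall>uk :: nat \<Rightarrow> 'a.
           (\<exists>!(ut, p, u). isph_step True DIM('a) wd h rho nu dt N V (X k) (LF k) (LS k) (LW k)
                (\<lambda>i. f (X k i) (real k * dt)) uk ut p u) \<and>
           (\<exists>!(ut, p, u). isph_step False DIM('a) wd h rho nu dt N V (X k) (LF k) (LS k) (LW k)
                (\<lambda>i. f (X k i) (real k * dt)) uk ut p u)"
proof (intro allI impI conjI)
  fix k uk assume k: "k < K"
  have wd_nonpos: "\<forall>s\<ge>0. wd s \<le> 0" using ref_weight_deriv_nonpos[OF weight] by blast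
  have wd_neg: "\<forall>s. 0 < s \<and> s < r0 \<longrightarrow> wd s < 0" using weight unfolding ref_weight_def by blast
  have part_k: "LF k \<union> LS k \<union> LW k = {1..N}" "LF k \<inter> LS k = {}" "LF k \<inter> LW k = {}" "LS k \<inter> LW k = {}"
    using part k by blast+
  have conn_k: "h_connected r0 h N (X k) (LF k) (LS k) (LW k)" using conn k by blast
  note step_ex1 = isph_step_ex1[OF wd_nonpos wd_neg h less_imp_le[OF nu] dt V(1) part_k conn_k]
  show "\<exists>!(ut, p, u). isph_step True DIM('a) wd h rho nu dt N V (X k) (LF k) (LS k) (LW k)
      (\<lambda>i. f (X k i) (real k * dt)) uk ut p u"
    by (rule step_ex1)
  show "\<exists>!(ut, p, u). isph_step False DIM('a) wd h rho nu dt N V (X k) (LF k) (LS k) (LW k)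
      (\<lambda>i. f (X k i) (real k * dt)) uk ut p u"
    by (rule step_ex1)
qed

end
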